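(* For all sr-expressions $e \in \mathcal{T}$, we have $L_\Sigma(e) = \llbracket e\rrbracket$.
   Context: Fix a finite alphabet $\Sigma$. The set $\mathcal{T}$ of series-rational expressions (sr-expressions) is generated by $e, f ::= 0 \mid 1 \mid \mathtt{a}\in\Sigma \mid e+f \mid e\cdot f \mid e\parallel f \mid e^*$. Their semantics $\llbracket -\rrbracket$ maps each expression to a set of series-parallel pomsets: $\llbracket 0\rrbracket=\emptyset$, $\llbracket 1\rrbracket=\{1\}$ (the empty pomset), $\llbracket \mathtt{a}\rrbracket=\{\mathtt{a}\}$, and $+,\cdot,\parallel,{}^*$ are interpreted as union, pointwise sequential composition, pointwise parallel composition and Kleene closure of pomset languages. $\mathcal{F}\subseteq\mathcal{T}$ is the smallest set with $1\in\mathcal{F}$; $e+f\in\mathcal{F}$ if $e\in\mathcal{F}$ or $f\in\mathcal{F}$; $e\cdot f, e\parallel f\in\mathcal{F}$ if $e,f\in\mathcal{F}$; and $e^*\in\mathcal{F}$ for all $e$. A pomset automaton (PA) is a tuple $\langle Q,F,\delta,\gamma\rangle$ with states $Q$, accepting states $F\subseteq Q$, $\delta: Q\times\Sigma\to 2^Q$ and $\gamma: Q\times\mathbb{M}(Q)\to 2^Q$ (where $\mathbb{M}(Q)$ is the set of finite multisets over $Q$), such that for each $q$ only finitely many $\phi$ have $\gamma(q,\phi)\neq\emptyset$. Its run relation $\rightarrow$ is the smallest relation with: $q\xrightarrow{1} q$; $q\xrightarrow{\mathtt{a}} q'$ if $q'\in\delta(q,\mathtt{a})$; $q\xrightarrow{U\cdot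 V}q'$ if $q\xrightarrow{U}q''\xrightarrow{V}q'$; and $q\xrightarrow{U_1\parallel\cdots\parallel U_n}q'$ if $q'\in\gamma(q,\{\!\{q_1,\dots,q_n\}\!\})$ and $q_i\xrightarrow{U_i}q_i'\in F$ for all $i$. The language of $q$ is $\{U : q\xrightarrow{U} q'\in F\}$. For $e\in\mathcal{T}$ and $T\subseteq\mathcal{T}$, let $e\star T = T$ if $e\in\mathcal{F}$ and $\emptyset$ otherwise, and let $T ; e$ denote the set $\{f\cdot e : f\in T\}$. The derivatives $\delta_\Sigma:\mathcal{T}\times\Sigma\to 2^{\mathcal{T}}$ and $\gamma_\Sigma:\mathcal{T}\times\mathbb{M}(\mathcal{T})\to 2^{\mathcal{T}}$ are defined by: $\delta_\Sigma(0,\mathtt a)=\delta_\Sigma(1,\mathtt a)=\emptyset$; $\delta_\Sigma(\mathtt b,\mathtt a)=\{1 : \mathtt a=\mathtt b\}$; $\delta_\Sigma(e+f,\mathtt a)=\delta_\Sigma(e,\mathtt a)\cup\delta_\Sigma(f,\mathtt a)$; $\delta_\Sigma(e\cdot f,\mathtt a)=\{g\cdot f : g\in\delta_\Sigma(e,\mathtt a)\}\cup e\star\delta_\Sigma(f,\mathtt a)$; $\delta_\Sigma(e\parallel f,\mathtt a)=\emptyset$; $\delta_\Sigma(e^*,\mathtt a)=\{g\cdot e^* : g\in\delta_\Sigma(e,\mathtt a)\}$; and $\gamma_\Sigma(0,\phi)=\gamma_\Sigma(1,\phi)=\gamma_\Sigma(\mathtt b,\phi)=\emptyset$; $\gamma_\Sigma(e+f,\phi)=\gamma_\Sigma(e,\phi)\cup\gamma_\Sigma(f,\phi)$;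 $\gamma_\Sigma(e\cdot f,\phi)=\{g\cdot f: g\in\gamma_\Sigma(e,\phi)\}\cup e\star\gamma_\Sigma(f,\phi)$; $\gamma_\Sigma(e\parallel f,\phi)=\{1 : \phi=\{\!\{e,f\}\!\}\}$; $\gamma_\Sigma(e^*,\phi)=\{g\cdot e^* : g\in\gamma_\Sigma(e,\phi)\}$. The syntactic PA is $A_\Sigma=\langle\mathcal{T},\mathcal{F},\delta_\Sigma,\gamma_\Sigma\rangle$, and $L_\Sigma(e)$ denotes the language of state $e$ in $A_\Sigma$. *)

theory Defs
  imports Main "HOL-Library.Multiset"
begin

text \<open>A pomset is an isomorphism class of finite labelled posets. We work with concrete
labelled posets whose carrier is a finite set of naturals; every pomset language below is
defined isomorphism-invariantly, i.e. it contains every concrete representative of each of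
its pomsets.\<close>

record 'a lp =
  car :: "nat set"
  ord :: "nat \<Rightarrow> nat \<Rightarrow> bool"
  lab :: "nat \<Rightarrow> 'a"

definition wf_lp :: "'a lp \<Rightarrow> bool" where
  "wf_lp U \<longleftrightarrow> finite (car U)
     \<and> (\<forall>x y. ord U x y \<longrightarrow> x \<in> car U \<and> y \<in> car U)
     \<and> (\<forall>x\<in>car U. ord U x x)
     \<and> (\<forall>x y. ord U x y \<and> ord U y x \<longrightarrow> x = y)
     \<and> (\<forall>x y z. ord U x y \<and> ord U y z \<longrightarrow> ord U x z)"

definition iso_lp :: "'a lp \<Rightarrow> 'a lp \<Rightarrow> bool" where
  "iso_lp U V \<longleftrightarrow> (\<exists>f. bij_betw f (car U) (car V)
     \<and> (\<forall>x\<in>car U. lab V (f x) = lab U x)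
     \<and> (\<forall>x\<in>car U. \<forall>y\<in>car U. ord U x y \<longleftrightarrow> ord V (f x) (f y)))"

definition restr_lp :: "'a lp \<Rightarrow> nat set \<Rightarrow> 'a lp" where
  "restr_lp U A = \<lparr>car = A, ord = (\<lambda>x y. ord U x y \<and> x \<in> A \<and> y \<in> A), lab = lab U\<rparr>"

definition is_empty_pom :: "'a lp \<Rightarrow> bool" where
  "is_empty_pom U \<longleftrightarrow> wf_lp U \<and> car U = {}"

definition is_prim_pom :: "'a lp \<Rightarrow> 'a \<Rightarrow> bool" where
  "is_prim_pom U a \<longleftrightarrow> wf_lp U \<and> (\<exists>x. car U = {x} \<and> lab U x = a)"

definition seq_of :: "'a lp \<Rightarrow> 'a lp \<Rightarrow> 'a lp \<Rightarrow> bool" where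
  "seq_of U V W \<longleftrightarrow> wf_lp U \<and> wf_lp V \<and> wf_lp W \<and> (\<exists>A B. A \<union> B = car U \<and> A \<inter> B = {}
     \<and> iso_lp (restr_lp U A) V \<and> iso_lp (restr_lp U B) W
     \<and> (\<forall>x\<in>A. \<forall>y\<in>B. ord U x y))"

definition par_of_list :: "'a lp \<Rightarrow> 'a lp list \<Rightarrow> bool" where
  "par_of_list U Us \<longleftrightarrow> wf_lp U \<and> (\<forall>i<length Us. wf_lp (Us ! i))
     \<and> (\<exists>A :: nat \<Rightarrow> nat set. (\<Union>i<length Us. A i) = car U
        \<and> (\<forall>i<length Us. \<forall>j<length Us. i \<noteq> j \<longrightarrow> A i \<inter> A j = {})
        \<and> (\<forall>i<length Us. iso_lp (restr_lp U (A i)) (Us ! i))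
        \<and> (\<forall>i<length Us. \<forall>j<length Us. i \<noteq> j \<longrightarrow> (\<forall>x\<in>A i. \<forall>y\<in>A j. \<not> ord U x y)))"

definition par_of :: "'a lp \<Rightarrow> 'a lp \<Rightarrow> 'a lp \<Rightarrow> bool" where
  "par_of U V W \<longleftrightarrow> par_of_list U [V, W]"

definition seq_lang :: "'a lp set \<Rightarrow> 'a lp set \<Rightarrow> 'a lp set" where
  "seq_lang X Y = {U. \<exists>V\<in>X. \<exists>W\<in>Y. seq_of U V W}"

definition par_lang :: "'a lp set \<Rightarrow> 'a lp set \<Rightarrow> 'a lp set" where
  "par_lang X Y = {U. \<exists>V\<in>X. \<exists>W\<in>Y. par_of U V W}"

fun lang_pow :: "'a lp set \<Rightarrow> nat \<Rightarrow> 'a lp set" where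
  "lang_pow X 0 = {U. is_empty_pom U}"
| "lang_pow X (Suc n) = seq_lang X (lang_pow X n)"

definition kleene :: "'a lp set \<Rightarrow> 'a lp set" where
  "kleene X = (\<Union>n. lang_pow X n)"

datatype 'a srexp = Zero | One | Sym 'a | Plus "'a srexp" "'a srexp"
  | Seq "'a srexp" "'a srexp" | Par "'a srexp" "'a srexp" | Star "'a srexp"

fun sem :: "'a srexp \<Rightarrow> 'a lp set" where
  "sem Zero = {}"
| "sem One = {U. is_empty_pom U}"
| "sem (Sym a) = {U. is_prim_pom U a}"
| "sem (Plus e f) = sem e \<union> sem f"
| "sem (Seq e f) = seq_lang (sem e) (sem f)"
| "sem (Par e f) = par_lang (sem e) (sem f)"
| "sem (Star e) = kleene (sem e)"

inductive run :: "'q set \<Rightarrow> ('q \<Rightarrow> 'a \<Rightarrow> 'q set) \<Rightarrow> ('q \<Rightarrow> 'q multiset \<Rightarrow> 'q set)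
    \<Rightarrow> 'q \<Rightarrow> 'a lp \<Rightarrow> 'q \<Rightarrow> bool"
  for F \<delta> \<gamma> where
  run_one: "is_empty_pom U \<Longrightarrow> run F \<delta> \<gamma> q U q"
| run_sym: "is_prim_pom U a \<Longrightarrow> q' \<in> \<delta> q a \<Longrightarrow> run F \<delta> \<gamma> q U q'"
| run_seq: "run F \<delta> \<gamma> q V q'' \<Longrightarrow> run F \<delta> \<gamma> q'' W q' \<Longrightarrow> seq_of U V W \<Longrightarrow> run F \<delta> \<gamma> q U q'"
| run_par: "q' \<in> \<gamma> q (mset qs) \<Longrightarrow> length Us = length qs
     \<Longrightarrow> (\<forall>i<length qs. \<exists>r. run F \<delta> \<gamma> (qs ! i) (Us ! i) r \<and> r \<in> F)
     \<Longrightarrow> par_of_list U Us \<Longrightarrow> run F \<delta> \<gamma> q U q'"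

definition pa_lang :: "'q set \<Rightarrow> ('q \<Rightarrow> 'a \<Rightarrow> 'q set) \<Rightarrow> ('q \<Rightarrow> 'q multiset \<Rightarrow> 'q set)
    \<Rightarrow> 'q \<Rightarrow> 'a lp set" where
  "pa_lang F \<delta> \<gamma> q = {U. \<exists>q'. run F \<delta> \<gamma> q U q' \<and> q' \<in> F}"

inductive_set FF :: "'a srexp set" where
  FF_one: "One \<in> FF"
| FF_plus1: "e \<in> FF \<Longrightarrow> Plus e f \<in> FF"
| FF_plus2: "f \<in> FF \<Longrightarrow> Plus e f \<in> FF"
| FF_seq: "e \<in> FF \<Longrightarrow> f \<in> FF \<Longrightarrow> Seq e f \<in> FF"
| FF_par: "e \<in> FF \<Longrightarrow> f \<in> FF \<Longrightarrow> Par e f \<in> FF"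
| FF_star: "Star e \<in> FF"

definition star_op :: "'a srexp \<Rightarrow> 'a srexp set \<Rightarrow> 'a srexp set" where
  "star_op e T = (if e \<in> FF then T else {})"

fun deltaS :: "'a srexp \<Rightarrow> 'a \<Rightarrow> 'a srexp set" where
  "deltaS Zero a = {}"
| "deltaS One a = {}"
| "deltaS (Sym b) a = (if a = b then {One} else {})"
| "deltaS (Plus e f) a = deltaS e a \<union> deltaS f a"
| "deltaS (Seq e f) a = {Seq g f | g. g \<in> deltaS e a} \<union> star_op e (deltaS f a)"
| "deltaS (Par e f) a = {}"
| "deltaS (Star e) a = {Seq g (Star e) | g. g \<in> deltaS e a}"

fun gammaS :: "'a srexp \<Rightarrow> 'a srexp multiset \<Rightarrow> 'a srexp set" where
  "gammaS Zero \<phi> = {}"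
| "gammaS One \<phi> = {}"
| "gammaS (Sym b) \<phi> = {}"
| "gammaS (Plus e f) \<phi> = gammaS e \<phi> \<union> gammaS f \<phi>"
| "gammaS (Seq e f) \<phi> = {Seq g f | g. g \<in> gammaS e \<phi>} \<union> star_op e (gammaS f \<phi>)"
| "gammaS (Par e f) \<phi> = (if \<phi> = {#e, f#} then {One} else {})"
| "gammaS (Star e) \<phi> = {Seq g (Star e) | g. g \<in> gammaS e \<phi>}"

definition LS :: "'a srexp \<Rightarrow> 'a lp set" where
  "LS e = pa_lang FF deltaS gammaS e"

end

theory Submission
  imports Defs
begin

(*
  Soundness: a run from e to e' on U is read as the inclusion U \<cdot> [[e']] \<subseteq> [[e]], which is
  proved by induction on the run. The base cases are the derivatives: if g \<in> \<delta>(e, a) then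
  a \<cdot> [[g]] \<subseteq> [[e]], and if g \<in> \<gamma>(e, \<phi>) then U \<cdot> [[g]] \<subseteq> [[e]] whenever U is a
  parallel composition of members of [[f]] for the f in \<phi>; sequential steps compose by
  associativity of \<cdot>. Accepting expressions denote languages containing 1, so a pomset
  accepted from e lies in [[e]].

  Completeness: by induction on e. A state whose transitions all reappear at a state p is
  simulated by p, so runs from e lift to runs from e + f, and runs from e to e' lift to runs
  from e \<cdot> f to e' \<cdot> f; when e' is accepting, f's transitions reappear at e' \<cdot> f. The same
  argument for e \<cdot> e\<^sup>* and e\<^sup>* handles the star.
*)

lemma car_restr_lp [simp]: "car (restr_lp T S) = S"
  and ord_restr_lp [simp]: "ord (restr_lp T S) x y \<longleftrightarrow> ord T x y \<and> x \<in> S \<and> y \<in> S"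
  and lab_restr_lp [simp]: "lab (restr_lp T S) = lab T"
  by (simp_all add: restr_lp_def)

lemma restr_lp_restr_lp: "S' \<subseteq> S \<Longrightarrow> restr_lp (restr_lp T S) S' = restr_lp T S'"
  by (auto simp: restr_lp_def fun_eq_iff)

lemma ord_in_car: "wf_lp T \<Longrightarrow> ord T x y \<Longrightarrow> x \<in> car T \<and> y \<in> car T"
  unfolding wf_lp_def by blast

lemma restr_lp_car: "wf_lp T \<Longrightarrow> restr_lp T (car T) = T"
  by (cases T) (auto simp: restr_lp_def fun_eq_iff dest: ord_in_car)

lemma wf_lp_restr_lp:
  assumes "wf_lp T" "S \<subseteq> car T"
  shows "wf_lp (restr_lp T S)"
proof -
  have T: "finite (car T)" "\<And>x. x \<in> car T \<Longrightarrow> ord T x x"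
    "\<And>x y. ord T x y \<Longrightarrow> ord T y x \<Longrightarrow> x = y"
    "\<And>x y z. ord T x y \<Longrightarrow> ord T y z \<Longrightarrow> ord T x z"
    using assms(1) unfolding wf_lp_def by blast+
  show ?thesis
    unfolding wf_lp_def using finite_subset[OF assms(2) T(1)] T(2-4) assms(2) by auto
qed

lemma is_empty_pom_restr_lp_empty: "wf_lp T \<Longrightarrow> is_empty_pom (restr_lp T {})"
  by (simp add: is_empty_pom_def wf_lp_restr_lp)

lemma iso_lpE:
  assumes "iso_lp T X"
  obtains f where "bij_betw f (car T) (car X)" "\<And>x. x \<in> car T \<Longrightarrow> lab X (f x) = lab T x"
    "\<And>x y. x \<in> car T \<Longrightarrow> y \<in> car T \<Longrightarrow> ord T x y \<longleftrightarrow> ord X (f x) (f y)"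
  using assms unfolding iso_lp_def by blast

lemma iso_lp_refl: "iso_lp T T"
  unfolding iso_lp_def by (rule exI[of _ id]) auto

lemma iso_lp_trans:
  assumes "iso_lp T X" "iso_lp X Y"
  shows "iso_lp T Y"
proof -
  obtain f where f: "bij_betw f (car T) (car X)" "\<And>x. x \<in> car T \<Longrightarrow> lab X (f x) = lab T x"
    "\<And>x y. x \<in> car T \<Longrightarrow> y \<in> car T \<Longrightarrow> ord T x y \<longleftrightarrow> ord X (f x) (f y)"
    by (rule iso_lpE[OF assms(1)]) blast
  obtain g where g: "bij_betw g (car X) (car Y)" "\<And>x. x \<in> car X \<Longrightarrow> lab Y (g x) = lab X x"
    "\<And>x y. x \<in> car X \<Longrightarrow> y \<in> car X \<Longrightarrow> ord X x y \<longleftrightarrow> ord Y (g x) (g y)"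
    by (rule iso_lpE[OF assms(2)]) blast
  have "f x \<in> car X" if "x \<in> car T" for x
    using f(1) that by (rule bij_betw_apply)
  then show ?thesis
    unfolding iso_lp_def using f g
    by (intro exI[of _ "g \<circ> f"]) (auto intro: bij_betw_trans)
qed

lemma iso_lp_car_empty: "car T = {} \<Longrightarrow> car X = {} \<Longrightarrow> iso_lp T X"
  unfolding iso_lp_def by (rule exI[of _ id]) auto

lemma car_empty_if_iso_lp: "iso_lp T X \<Longrightarrow> car X = {} \<Longrightarrow> car T = {}"
  unfolding iso_lp_def bij_betw_def by auto

lemma iso_lp_restr_lp_vimage:
  assumes f: "bij_betw f (car T) (car X)" "\<And>x. x \<in> car T \<Longrightarrow> lab X (f x) = lab T x"
    "\<And>x y. x \<in> car T \<Longrightarrow> y \<in> car T \<Longrightarrow> ord T x y \<longleftrightarrow> ord X (f x) (f y)"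
    and "A \<subseteq> car X"
  shows "iso_lp (restr_lp T (car T \<inter> f -` A)) (restr_lp X A)"
proof -
  have "f ` (car T \<inter> f -` A) = f ` car T \<inter> A"
    by blast
  also have "\<dots> = A"
    using f(1) \<open>A \<subseteq> car X\<close> unfolding bij_betw_def by blast
  finally have "bij_betw f (car T \<inter> f -` A) A"
    by (rule bij_betw_subset[OF f(1) Int_lower1])
  then show ?thesis
    unfolding iso_lp_def using f(2,3) by (intro exI[of _ f]) simp
qed

lemma is_empty_pom_iso:
  assumes "wf_lp T" "iso_lp T X" "is_empty_pom X"
  shows "is_empty_pom T"
  using assms car_empty_if_iso_lp unfolding is_empty_pom_def by blast

lemma is_prim_pom_iso:
  assumes "wf_lp T" "iso_lp T X" "is_prim_pom X a"
  shows "is_prim_pom T a"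
proof -
  obtain f where f: "bij_betw f (car T) (car X)" "\<And>x. x \<in> car T \<Longrightarrow> lab X (f x) = lab T x"
    by (rule iso_lpE[OF assms(2)]) blast
  obtain x where x: "car X = {x}" "lab X x = a"
    using assms(3) unfolding is_prim_pom_def by blast
  have "card (car T) = 1"
    using bij_betw_same_card[OF f(1)] x(1) by simp
  then obtain y where y: "car T = {y}"
    by (rule card_1_singletonE)
  then have "f y = x"
    using f(1) x(1) bij_betwE by fastforce
  then have "lab T y = a"
    using f(2)[of y] x(2) y by simp
  then show ?thesis
    unfolding is_prim_pom_def using assms(1) y by blast
qed

lemma seq_ofI:
  assumes "wf_lp U" "wf_lp V" "wf_lp W" "A \<union> B = car U" "A \<inter> B = {}"
    "iso_lp (restr_lp U A) V" "iso_lp (restr_lp U B) W" "\<forall>x\<in>A. \<forall>y\<in>B. ord U x y"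
  shows "seq_of U V W"
  unfolding seq_of_def using assms by blast

lemma seq_ofE:
  assumes "seq_of U V W"
  obtains A B where "wf_lp U" "wf_lp V" "wf_lp W" "A \<union> B = car U" "A \<inter> B = {}"
    "iso_lp (restr_lp U A) V" "iso_lp (restr_lp U B) W" "\<forall>x\<in>A. \<forall>y\<in>B. ord U x y"
  using assms unfolding seq_of_def by (elim conjE exE) (rule that)

lemma seq_of_iso:
  assumes "wf_lp T" "iso_lp T X" "seq_of X V W"
  shows "seq_of T V W"
proof -
  obtain f where f: "bij_betw f (car T) (car X)" "\<And>x. x \<in> car T \<Longrightarrow> lab X (f x) = lab T x"
    "\<And>x y. x \<in> car T \<Longrightarrow> y \<in> car T \<Longrightarrow> ord T x y \<longleftrightarrow> ord X (f x) (f y)"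
    by (rule iso_lpE[OF assms(2)]) blast
  obtain A B where wf: "wf_lp V" "wf_lp W" and AB: "A \<union> B = car X" "A \<inter> B = {}"
      "iso_lp (restr_lp X A) V" "iso_lp (restr_lp X B) W" "\<forall>x\<in>A. \<forall>y\<in>B. ord X x y"
    by (rule seq_ofE[OF assms(3)]) blast
  have "A \<subseteq> car X" "B \<subseteq> car X"
    using AB(1) by blast+
  show ?thesis
  proof (rule seq_ofI[OF assms(1) wf])
    show "iso_lp (restr_lp T (car T \<inter> f -` A)) V" "iso_lp (restr_lp T (car T \<inter> f -` B)) W"
      using iso_lp_trans[OF iso_lp_restr_lp_vimage[OF f] AB(3)]
        iso_lp_trans[OF iso_lp_restr_lp_vimage[OF f] AB(4)] \<open>A \<subseteq> car X\<close> \<open>B \<subseteq> car X\<close>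
      by blast+
    show "(car T \<inter> f -` A) \<union> (car T \<inter> f -` B) = car T"
      using bij_betw_apply[OF f(1)] AB(1) by blast
    show "(car T \<inter> f -` A) \<inter> (car T \<inter> f -` B) = {}"
      using AB(2) by blast
    show "\<forall>x\<in>car T \<inter> f -` A. \<forall>y\<in>car T \<inter> f -` B. ord T x y"
      using f(3) AB(5) by simp
  qed
qed

lemma iso_lp_if_seq_of_empty_left: "seq_of T E V \<Longrightarrow> is_empty_pom E \<Longrightarrow> iso_lp T V"
  by (elim seq_ofE) (auto simp: is_empty_pom_def restr_lp_car dest: car_empty_if_iso_lp)

lemma iso_lp_if_seq_of_empty_right: "seq_of T V E \<Longrightarrow> is_empty_pom E \<Longrightarrow> iso_lp T V"
  by (elim seq_ofE) (auto simp: is_empty_pom_def restr_lp_car dest: car_empty_if_iso_lp)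

lemma seq_of_empty_leftI: "wf_lp V \<Longrightarrow> is_empty_pom E \<Longrightarrow> seq_of V E V"
  by (rule seq_ofI[of V E V "{}" "car V"])
    (auto simp: is_empty_pom_def restr_lp_car iso_lp_refl iso_lp_car_empty)

lemma seq_of_empty_rightI: "wf_lp V \<Longrightarrow> is_empty_pom E \<Longrightarrow> seq_of V V E"
  by (rule seq_ofI[of V V E "car V" "{}"])
    (auto simp: is_empty_pom_def restr_lp_car iso_lp_refl iso_lp_car_empty)

lemma seq_of_restr_lpI:
  assumes "wf_lp T" "A \<union> B \<subseteq> car T" "A \<inter> B = {}" "\<forall>x\<in>A. \<forall>y\<in>B. ord T x y"
    and "wf_lp V" "wf_lp W" "iso_lp (restr_lp T A) V" "iso_lp (restr_lp T B) W"
  shows "seq_of (restr_lp T (A \<union> B)) V W"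
proof (rule seq_ofI[OF wf_lp_restr_lp[OF assms(1,2)] assms(5,6), of A B])
  show "iso_lp (restr_lp (restr_lp T (A \<union> B)) A) V" "iso_lp (restr_lp (restr_lp T (A \<union> B)) B) W"
    using assms(7,8) by (simp_all add: restr_lp_restr_lp)
qed (use assms(3,4) in simp_all)

lemma seq_of_restr_lpE:
  assumes "seq_of (restr_lp T B) G H"
  obtains B1 B2 where "B1 \<union> B2 = B" "B1 \<inter> B2 = {}" "iso_lp (restr_lp T B1) G"
    "iso_lp (restr_lp T B2) H" "\<forall>x\<in>B1. \<forall>y\<in>B2. ord T x y"
proof -
  obtain B1 B2 where B: "B1 \<union> B2 = B" "B1 \<inter> B2 = {}" "iso_lp (restr_lp (restr_lp T B) B1) G"
      "iso_lp (restr_lp (restr_lp T B) B2) H" "\<forall>x\<in>B1. \<forall>y\<in>B2. ord (restr_lp T B) x y"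
    using assms by (rule seq_ofE) simp
  then have "B1 \<subseteq> B" "B2 \<subseteq> B"
    by blast+
  with B show thesis
    using that by (simp add: restr_lp_restr_lp)
qed

lemma seq_of_assoc_left:
  assumes "seq_of T U Y" "seq_of Y G H"
  obtains Z where "seq_of Z U G" "seq_of T Z H"
proof -
  obtain A B where wf: "wf_lp T" "wf_lp U" and AB: "A \<union> B = car T" "A \<inter> B = {}"
      "iso_lp (restr_lp T A) U" "iso_lp (restr_lp T B) Y" "\<forall>x\<in>A. \<forall>y\<in>B. ord T x y"
    by (rule seq_ofE[OF assms(1)]) blast
  have wfGH: "wf_lp G" "wf_lp H"
    using assms(2) by (rule seq_ofE, simp)+
  have "seq_of (restr_lp T B) G H"
    using seq_of_iso[OF wf_lp_restr_lp[OF wf(1)] AB(4) assms(2)] AB(1) by blast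
  then obtain B1 B2 where B: "B1 \<union> B2 = B" "B1 \<inter> B2 = {}" "iso_lp (restr_lp T B1) G"
      "iso_lp (restr_lp T B2) H" "\<forall>x\<in>B1. \<forall>y\<in>B2. ord T x y"
    by (rule seq_of_restr_lpE)
  let ?Z = "restr_lp T (A \<union> B1)"
  have "seq_of ?Z U G"
    by (rule seq_of_restr_lpI[OF wf(1) _ _ _ wf(2) wfGH(1) AB(3) B(3)])
      (use AB B in blast)+
  moreover have "seq_of (restr_lp T ((A \<union> B1) \<union> B2)) ?Z H"
    by (rule seq_of_restr_lpI[OF wf(1) _ _ _ wf_lp_restr_lp[OF wf(1)] wfGH(2) iso_lp_refl B(4)])
      (use AB B in blast)+
  moreover have "(A \<union> B1) \<union> B2 = car T"
    using AB(1) B(1) by blast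
  ultimately show thesis
    using that restr_lp_car[OF wf(1)] by simp
qed

lemma seq_of_assoc_right:
  assumes "seq_of T Y W" "seq_of Y U G"
  obtains Z where "seq_of Z G W" "seq_of T U Z"
proof -
  obtain A B where wf: "wf_lp T" "wf_lp W" and AB: "A \<union> B = car T" "A \<inter> B = {}"
      "iso_lp (restr_lp T A) Y" "iso_lp (restr_lp T B) W" "\<forall>x\<in>A. \<forall>y\<in>B. ord T x y"
    by (rule seq_ofE[OF assms(1)]) blast
  have wfUG: "wf_lp U" "wf_lp G"
    using assms(2) by (rule seq_ofE, simp)+
  have "seq_of (restr_lp T A) U G"
    using seq_of_iso[OF wf_lp_restr_lp[OF wf(1)] AB(3) assms(2)] AB(1) by blast
  then obtain A1 A2 where A: "A1 \<union> A2 = A" "A1 \<inter> A2 = {}" "iso_lp (restr_lp T A1) U"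
      "iso_lp (restr_lp T A2) G" "\<forall>x\<in>A1. \<forall>y\<in>A2. ord T x y"
    by (rule seq_of_restr_lpE)
  let ?Z = "restr_lp T (A2 \<union> B)"
  have "seq_of ?Z G W"
    by (rule seq_of_restr_lpI[OF wf(1) _ _ _ wfUG(2) wf(2) A(4) AB(4)])
      (use AB A in blast)+
  moreover have "seq_of (restr_lp T (A1 \<union> (A2 \<union> B))) U ?Z"
    by (rule seq_of_restr_lpI[OF wf(1) _ _ _ wfUG(1) wf_lp_restr_lp[OF wf(1)] A(3) iso_lp_refl])
      (use AB A in blast)+
  moreover have "A1 \<union> (A2 \<union> B) = car T"
    using AB(1) A(1) by blast
  ultimately show thesis
    using that restr_lp_car[OF wf(1)] by simp
qed

lemma par_of_listI:
  assumes "wf_lp U" "\<forall>i<length Us. wf_lp (Us ! i)" "(\<Union>i<length Us. A i) = car U"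
    "\<forall>i<length Us. \<forall>j<length Us. i \<noteq> j \<longrightarrow> A i \<inter> A j = {}"
    "\<forall>i<length Us. iso_lp (restr_lp U (A i)) (Us ! i)"
    "\<forall>i<length Us. \<forall>j<length Us. i \<noteq> j \<longrightarrow> (\<forall>x\<in>A i. \<forall>y\<in>A j. \<not> ord U x y)"
  shows "par_of_list U Us"
  unfolding par_of_list_def by (intro conjI exI[of _ A] assms)

lemma par_of_listE:
  assumes "par_of_list U Us"
  obtains A where "wf_lp U" "\<forall>i<length Us. wf_lp (Us ! i)" "(\<Union>i<length Us. A i) = car U"
    "\<forall>i<length Us. \<forall>j<length Us. i \<noteq> j \<longrightarrow> A i \<inter> A j = {}"
    "\<forall>i<length Us. iso_lp (restr_lp U (A i)) (Us ! i)"
    "\<forall>i<length Us. \<forall>j<length Us. i \<noteq> j \<longrightarrow> (\<forall>x\<in>A i. \<forall>y\<in>A j. \<not> ord U x y)"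
  using assms unfolding par_of_list_def by (elim conjE exE) (rule that)

lemma par_of_list_iso:
  assumes "wf_lp T" "iso_lp T X" "par_of_list X Us"
  shows "par_of_list T Us"
proof -
  obtain f where f: "bij_betw f (car T) (car X)" "\<And>x. x \<in> car T \<Longrightarrow> lab X (f x) = lab T x"
    "\<And>x y. x \<in> car T \<Longrightarrow> y \<in> car T \<Longrightarrow> ord T x y \<longleftrightarrow> ord X (f x) (f y)"
    by (rule iso_lpE[OF assms(2)]) blast
  obtain A where wf: "\<forall>i<length Us. wf_lp (Us ! i)" and A: "(\<Union>i<length Us. A i) = car X"
      "\<forall>i<length Us. \<forall>j<length Us. i \<noteq> j \<longrightarrow> A i \<inter> A j = {}"
      "\<forall>i<length Us. iso_lp (restr_lp X (A i)) (Us ! i)"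
      "\<forall>i<length Us. \<forall>j<length Us. i \<noteq> j \<longrightarrow> (\<forall>x\<in>A i. \<forall>y\<in>A j. \<not> ord X x y)"
    by (rule par_of_listE[OF assms(3)]) blast
  show ?thesis
  proof (rule par_of_listI[OF assms(1) wf, of "\<lambda>i. car T \<inter> f -` A i"])
    show "\<forall>i<length Us. iso_lp (restr_lp T (car T \<inter> f -` A i)) (Us ! i)"
    proof (intro allI impI)
      fix i
      assume "i < length Us"
      moreover from this have "A i \<subseteq> car X"
        using A(1) by blast
      ultimately show "iso_lp (restr_lp T (car T \<inter> f -` A i)) (Us ! i)"
        using iso_lp_trans[OF iso_lp_restr_lp_vimage[OF f] A(3)[rule_format]] by blast
    qed
    have "(\<Union>i<length Us. car T \<inter> f -` A i) = car T \<inter> f -` car X"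
      unfolding A(1)[symmetric] by blast
    also have "\<dots> = car T"
      using bij_betw_apply[OF f(1)] by blast
    finally show "(\<Union>i<length Us. car T \<inter> f -` A i) = car T" .
    show "\<forall>i<length Us. \<forall>j<length Us. i \<noteq> j \<longrightarrow> (car T \<inter> f -` A i) \<inter> (car T \<inter> f -` A j) = {}"
      using A(2) by blast
    show "\<forall>i<length Us. \<forall>j<length Us. i \<noteq> j \<longrightarrow>
        (\<forall>x\<in>car T \<inter> f -` A i. \<forall>y\<in>car T \<inter> f -` A j. \<not> ord T x y)"
      using f(3) A(4) by simp
  qed
qed

lemma par_ofI:
  assumes "wf_lp U" "wf_lp V" "wf_lp W" "A \<union> B = car U" "A \<inter> B = {}"
    "iso_lp (restr_lp U A) V" "iso_lp (restr_lp U B) W"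
    "\<forall>x\<in>A. \<forall>y\<in>B. \<not> ord U x y" "\<forall>x\<in>B. \<forall>y\<in>A. \<not> ord U x y"
  shows "par_of U V W"
  unfolding par_of_def
  by (rule par_of_listI[of _ _ "\<lambda>i. if i = 0 then A else B"])
    (use assms in \<open>auto simp: All_less_Suc lessThan_Suc\<close>)

lemma par_ofE:
  assumes "par_of U V W"
  obtains A B where "wf_lp U" "wf_lp V" "wf_lp W" "A \<union> B = car U" "A \<inter> B = {}"
    "iso_lp (restr_lp U A) V" "iso_lp (restr_lp U B) W"
    "\<forall>x\<in>A. \<forall>y\<in>B. \<not> ord U x y" "\<forall>x\<in>B. \<forall>y\<in>A. \<not> ord U x y"
  using assms unfolding par_of_def par_of_list_def
  by (simp add: All_less_Suc lessThan_Suc) (elim conjE exE, rule that, simp_all add: Un_commute)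

lemma par_of_commute: "par_of U V W \<Longrightarrow> par_of U W V"
  by (elim par_ofE, rule par_ofI) (auto simp: Un_commute Int_commute)

lemma par_of_emptyI: "is_empty_pom U \<Longrightarrow> par_of U U U"
  unfolding is_empty_pom_def by (rule par_ofI[of U U U "{}" "{}"]) (auto intro: iso_lp_car_empty)

text \<open>Pomset languages in the sense of the paper are the sets of labelled posets closed under
  isomorphism.\<close>

definition iso_closed :: "'a lp set \<Rightarrow> bool" where
  "iso_closed L \<longleftrightarrow> (\<forall>T X. X \<in> L \<longrightarrow> wf_lp T \<longrightarrow> iso_lp T X \<longrightarrow> T \<in> L)"

lemma iso_closedI:
  "(\<And>T X. X \<in> L \<Longrightarrow> wf_lp T \<Longrightarrow> iso_lp T X \<Longrightarrow> T \<in> L) \<Longrightarrow> iso_closed L"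
  unfolding iso_closed_def by blast

lemma iso_closedD: "iso_closed L \<Longrightarrow> X \<in> L \<Longrightarrow> wf_lp T \<Longrightarrow> iso_lp T X \<Longrightarrow> T \<in> L"
  unfolding iso_closed_def by blast

lemma iso_closed_empty: "iso_closed {}"
  by (rule iso_closedI) simp

lemma iso_closed_Un: "iso_closed X \<Longrightarrow> iso_closed Y \<Longrightarrow> iso_closed (X \<union> Y)"
  by (rule iso_closedI) (auto dest: iso_closedD)

lemma iso_closed_is_empty_pom: "iso_closed {U. is_empty_pom U}"
  by (rule iso_closedI) (simp add: is_empty_pom_iso)

lemma iso_closed_is_prim_pom: "iso_closed {U. is_prim_pom U a}"
  by (rule iso_closedI) (simp add: is_prim_pom_iso)

lemma iso_closed_seq_lang: "iso_closed (seq_lang X Y)"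
  by (rule iso_closedI) (auto simp: seq_lang_def intro: seq_of_iso)

lemma iso_closed_par_lang: "iso_closed (par_lang X Y)"
  by (rule iso_closedI) (auto simp: par_lang_def par_of_def intro: par_of_list_iso)

lemma iso_closed_kleene: "iso_closed (kleene X)"
proof -
  have "iso_closed (lang_pow X n)" for n
    by (cases n) (simp_all add: iso_closed_is_empty_pom iso_closed_seq_lang)
  then show ?thesis
    by (auto simp: kleene_def intro!: iso_closedI dest: iso_closedD)
qed

lemma iso_closed_sem: "iso_closed (sem e)"
  by (induction e) (simp_all add: iso_closed_empty iso_closed_Un iso_closed_is_empty_pom
      iso_closed_is_prim_pom iso_closed_seq_lang iso_closed_par_lang iso_closed_kleene)

lemma seq_lang_mono: "X \<subseteq> X' \<Longrightarrow> Y \<subseteq> Y' \<Longrightarrow> seq_lang X Y \<subseteq> seq_lang X' Y'"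
  unfolding seq_lang_def by blast

lemma par_lang_mono: "X \<subseteq> X' \<Longrightarrow> Y \<subseteq> Y' \<Longrightarrow> par_lang X Y \<subseteq> par_lang X' Y'"
  unfolding par_lang_def by blast

lemma kleene_mono: "X \<subseteq> Y \<Longrightarrow> kleene X \<subseteq> kleene Y"
proof -
  assume "X \<subseteq> Y"
  then have "lang_pow X n \<subseteq> lang_pow Y n" for n
    by (induction n) (simp_all add: seq_lang_mono)
  then show ?thesis
    unfolding kleene_def by blast
qed

lemma seq_lang_assoc: "seq_lang (seq_lang X Y) Z = seq_lang X (seq_lang Y Z)"
proof
  show "seq_lang (seq_lang X Y) Z \<subseteq> seq_lang X (seq_lang Y Z)"
    unfolding seq_lang_def by (blast elim: seq_of_assoc_right)
  show "seq_lang X (seq_lang Y Z) \<subseteq> seq_lang (seq_lang X Y) Z"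
    unfolding seq_lang_def by (blast elim: seq_of_assoc_left)
qed

lemma seq_lang_kleene_subset: "seq_lang X (kleene X) \<subseteq> kleene X"
proof
  fix U
  assume "U \<in> seq_lang X (kleene X)"
  then obtain n where "U \<in> seq_lang X (lang_pow X n)"
    unfolding kleene_def seq_lang_def by blast
  then have "U \<in> lang_pow X (Suc n)"
    by simp
  then show "U \<in> kleene X"
    unfolding kleene_def by blast
qed

lemma seq_lang_One_left_subset:
  assumes "iso_closed L"
  shows "seq_lang (sem One) L \<subseteq> L"
proof
  fix T
  assume "T \<in> seq_lang (sem One) L"
  then obtain E V where "is_empty_pom E" "V \<in> L" "seq_of T E V"
    by (auto simp: seq_lang_def)
  moreover from \<open>seq_of T E V\<close> have "wf_lp T"
    by (rule seq_ofE)
  ultimately show "T \<in> L"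
    using iso_closedD[OF assms] iso_lp_if_seq_of_empty_left by blast
qed

lemma seq_lang_One_right_subset:
  assumes "iso_closed L"
  shows "seq_lang L (sem One) \<subseteq> L"
proof
  fix T
  assume "T \<in> seq_lang L (sem One)"
  then obtain V E where "V \<in> L" "is_empty_pom E" "seq_of T V E"
    by (auto simp: seq_lang_def)
  moreover from \<open>seq_of T V E\<close> have "wf_lp T"
    by (rule seq_ofE)
  ultimately show "T \<in> L"
    using iso_closedD[OF assms] iso_lp_if_seq_of_empty_right by blast
qed

lemma subset_seq_lang_One_left: "L \<subseteq> Collect wf_lp \<Longrightarrow> L \<subseteq> seq_lang (sem One) L"
  unfolding seq_lang_def
  using seq_of_empty_leftI is_empty_pom_restr_lp_empty by fastforce

lemma subset_seq_lang_One_right: "L \<subseteq> Collect wf_lp \<Longrightarrow> L \<subseteq> seq_lang L (sem One)"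
  unfolding seq_lang_def
  using seq_of_empty_rightI is_empty_pom_restr_lp_empty by fastforce

lemma sem_wf: "sem e \<subseteq> Collect wf_lp"
proof (induction e)
  case (Star e)
  have "lang_pow (sem e) n \<subseteq> Collect wf_lp" for n
    by (cases n) (auto simp: is_empty_pom_def seq_lang_def elim: seq_ofE)
  then show ?case
    by (auto simp: kleene_def)
qed (auto simp: is_empty_pom_def is_prim_pom_def seq_lang_def par_lang_def elim: seq_ofE par_ofE)

lemma sem_One_subset_if_FF: "e \<in> FF \<Longrightarrow> sem One \<subseteq> sem e"
proof (induction rule: FF.induct)
  case (FF_seq e f)
  show ?case
  proof
    fix U :: "'a lp"
    assume "U \<in> sem One"
    then have "seq_of U U U"
      using seq_of_empty_leftI[of U U] by (simp add: is_empty_pom_def)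
    with \<open>U \<in> sem One\<close> FF_seq.IH show "U \<in> sem (Seq e f)"
      by (auto simp: seq_lang_def)
  qed
next
  case (FF_par e f)
  show ?case
  proof
    fix U :: "'a lp"
    assume "U \<in> sem One"
    then have "par_of U U U"
      by (simp add: par_of_emptyI)
    with \<open>U \<in> sem One\<close> FF_par.IH show "U \<in> sem (Par e f)"
      by (auto simp: par_lang_def)
  qed
next
  case (FF_star e)
  have "sem One = lang_pow (sem e) 0"
    by simp
  then show ?case
    unfolding sem.simps(7) kleene_def by blast
qed auto

lemma sem_subset_Seq_if_FF: "e \<in> FF \<Longrightarrow> sem f \<subseteq> sem (Seq e f)"
proof -
  assume "e \<in> FF"
  have "sem f \<subseteq> seq_lang (sem One) (sem f)"
    by (rule subset_seq_lang_One_left[OF sem_wf])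
  also have "\<dots> \<subseteq> seq_lang (sem e) (sem f)"
    by (rule seq_lang_mono[OF sem_One_subset_if_FF[OF \<open>e \<in> FF\<close>] order_refl])
  finally show ?thesis
    by simp
qed

section \<open>Soundness of the syntactic PA\<close>

lemma mem_if_seq_lang_FF_subset:
  assumes "seq_lang {U} (sem r) \<subseteq> L" "r \<in> FF" "wf_lp U"
  shows "U \<in> L"
proof -
  have "U \<in> seq_lang {U} (sem One)"
    using subset_seq_lang_One_right[of "{U}"] assms(3) by blast
  moreover have "seq_lang {U} (sem One) \<subseteq> seq_lang {U} (sem r)"
    by (rule seq_lang_mono[OF order_refl sem_One_subset_if_FF[OF assms(2)]])
  ultimately show ?thesis
    using assms(1) by blast
qed

lemma seq_lang_Seq_subset:
  "seq_lang X (sem g) \<subseteq> sem e \<Longrightarrow> seq_lang X (sem (Seq g f)) \<subseteq> sem (Seq e f)"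
  by (simp add: seq_lang_assoc[symmetric] seq_lang_mono)

lemma seq_lang_Star_subset:
  assumes "seq_lang X (sem g) \<subseteq> sem e"
  shows "seq_lang X (sem (Seq g (Star e))) \<subseteq> sem (Star e)"
proof -
  have "seq_lang X (sem (Seq g (Star e))) \<subseteq> seq_lang (sem e) (kleene (sem e))"
    using assms by (simp add: seq_lang_assoc[symmetric] seq_lang_mono)
  also have "\<dots> \<subseteq> kleene (sem e)"
    by (rule seq_lang_kleene_subset)
  finally show ?thesis
    by simp
qed

lemma deltaS_sound: "g \<in> deltaS e a \<Longrightarrow> seq_lang (sem (Sym a)) (sem g) \<subseteq> sem e"
proof (induction e arbitrary: g)
  case (Sym b)
  then have "g = One" "b = a"
    by (auto split: if_splits)
  then show ?case
    using seq_lang_One_right_subset[OF iso_closed_sem, of "Sym a"] by simp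
next
  case (Plus e1 e2)
  then show ?case
    by auto
next
  case (Seq e1 e2)
  from Seq.prems consider g' where "g = Seq g' e2" "g' \<in> deltaS e1 a"
    | "e1 \<in> FF" "g \<in> deltaS e2 a"
    by (auto simp: star_op_def split: if_splits)
  then show ?case
  proof cases
    case 1
    then show ?thesis
      using seq_lang_Seq_subset[OF Seq.IH(1)] by simp
  next
    case 2
    then show ?thesis
      using Seq.IH(2) sem_subset_Seq_if_FF by blast
  qed
next
  case (Star e)
  then obtain g' where "g = Seq g' (Star e)" "g' \<in> deltaS e a"
    by auto
  then show ?case
    using seq_lang_Star_subset[OF Star.IH] by simp
qed auto

lemma mset_eq_pairD: "mset qs = {#e, f#} \<Longrightarrow> qs = [e, f] \<or> qs = [f, e]"
proof -
  assume qs: "mset qs = {#e, f#}"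
  have "length qs = Suc (Suc 0)"
    by (simp only: size_mset[symmetric] qs) simp
  then obtain x y where "qs = [x, y]"
    by (auto simp: length_Suc_conv)
  with qs show ?thesis
    by (auto simp: add_eq_conv_ex)
qed

lemma par_of_list_mem_sem_Par:
  assumes "mset qs = {#e, f#}" "length Us = length qs" "\<forall>i<length qs. Us ! i \<in> sem (qs ! i)"
    and "par_of_list U Us"
  shows "U \<in> sem (Par e f)"
proof -
  have "length Us = Suc (Suc 0)"
    using assms(2) mset_eq_pairD[OF assms(1)] by auto
  then obtain V W where Us: "Us = [V, W]"
    by (auto simp: length_Suc_conv)
  from mset_eq_pairD[OF assms(1)] show ?thesis
  proof
    assume "qs = [e, f]"
    then show ?thesis
      using assms(3,4) Us by (auto simp: par_lang_def par_of_def All_less_Suc)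
  next
    assume "qs = [f, e]"
    then have "W \<in> sem e" "V \<in> sem f"
      using assms(3) Us by (auto simp: All_less_Suc)
    moreover have "par_of U W V"
      using assms(4) Us par_of_commute unfolding par_of_def by blast
    ultimately show ?thesis
      by (auto simp: par_lang_def)
  qed
qed

lemma gammaS_sound:
  assumes "length Us = length qs" "\<forall>i<length qs. Us ! i \<in> sem (qs ! i)" "par_of_list U Us"
  shows "g \<in> gammaS e (mset qs) \<Longrightarrow> seq_lang {U} (sem g) \<subseteq> sem e"
proof (induction e arbitrary: g)
  case (Par e1 e2)
  then have "g = One" "mset qs = {#e1, e2#}"
    by (auto split: if_splits)
  then have "U \<in> sem (Par e1 e2)"
    using par_of_list_mem_sem_Par assms by blast
  then have "seq_lang {U} (sem g) \<subseteq> seq_lang (sem (Par e1 e2)) (sem One)"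
    using \<open>g = One\<close> by (intro seq_lang_mono) auto
  also have "\<dots> \<subseteq> sem (Par e1 e2)"
    by (rule seq_lang_One_right_subset[OF iso_closed_sem])
  finally show ?case .
next
  case (Plus e1 e2)
  then show ?case
    by auto
next
  case (Seq e1 e2)
  from Seq.prems consider g' where "g = Seq g' e2" "g' \<in> gammaS e1 (mset qs)"
    | "e1 \<in> FF" "g \<in> gammaS e2 (mset qs)"
    by (auto simp: star_op_def split: if_splits)
  then show ?case
  proof cases
    case 1
    then show ?thesis
      using seq_lang_Seq_subset[OF Seq.IH(1)] by simp
  next
    case 2
    then show ?thesis
      using Seq.IH(2) sem_subset_Seq_if_FF by blast
  qed
next
  case (Star e)
  then obtain g' where "g = Seq g' (Star e)" "g' \<in> gammaS e (mset qs)"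
    by auto
  then show ?case
    using seq_lang_Star_subset[OF Star.IH] by simp
qed auto

lemma run_wf: "run F \<delta> \<gamma> q U q' \<Longrightarrow> wf_lp U"
  by (induction rule: run.induct) (auto simp: is_empty_pom_def is_prim_pom_def elim: seq_ofE par_of_listE)

lemma run_sound: "run FF deltaS gammaS e U e' \<Longrightarrow> seq_lang {U} (sem e') \<subseteq> sem e"
proof (induction rule: run.induct)
  case (run_one U q)
  then have "seq_lang {U} (sem q) \<subseteq> seq_lang (sem One) (sem q)"
    by (intro seq_lang_mono) auto
  also have "\<dots> \<subseteq> sem q"
    by (rule seq_lang_One_left_subset[OF iso_closed_sem])
  finally show ?case .
next
  case (run_sym U a q' q)
  then have "seq_lang {U} (sem q') \<subseteq> seq_lang (sem (Sym a)) (sem q')"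
    by (intro seq_lang_mono) auto
  also have "\<dots> \<subseteq> sem q"
    by (rule deltaS_sound[OF run_sym(2)])
  finally show ?case .
next
  case (run_seq q V q'' W q' U)
  then have "seq_lang {U} (sem q') \<subseteq> seq_lang (seq_lang {V} {W}) (sem q')"
    by (intro seq_lang_mono) (auto simp: seq_lang_def)
  also have "\<dots> = seq_lang {V} (seq_lang {W} (sem q'))"
    by (rule seq_lang_assoc)
  also have "\<dots> \<subseteq> seq_lang {V} (sem q'')"
    by (rule seq_lang_mono[OF order_refl run_seq.IH(2)])
  also have "\<dots> \<subseteq> sem q"
    by (rule run_seq.IH(1))
  finally show ?case .
next
  case (run_par q' q qs Us U)
  have "Us ! i \<in> sem (qs ! i)" if i: "i < length qs" for i
  proof -
    obtain r where "seq_lang {Us ! i} (sem r) \<subseteq> sem (qs ! i)" "r \<in> FF"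
      using run_par.IH i by blast
    moreover have "wf_lp (Us ! i)"
      using run_par.hyps(2,3) i by (auto elim: par_of_listE)
    ultimately show ?thesis
      by (rule mem_if_seq_lang_FF_subset)
  qed
  then show ?case
    using gammaS_sound run_par.hyps by blast
qed

lemma LS_subset_sem: "LS e \<subseteq> sem e"
proof
  fix U
  assume "U \<in> LS e"
  then obtain e' where run: "run FF deltaS gammaS e U e'" and "e' \<in> FF"
    unfolding LS_def pa_lang_def by blast
  show "U \<in> sem e"
    by (rule mem_if_seq_lang_FF_subset[OF run_sound[OF run] \<open>e' \<in> FF\<close> run_wf[OF run]])
qed

section \<open>Completeness of the syntactic PA\<close>

text \<open>The second disjunct covers runs that take no transition at all.\<close>

lemma run_from_larger_state:
  "run F \<delta> \<gamma> q U q' \<Longrightarrow> (\<And>a. \<delta> q a \<subseteq> \<delta> p a) \<Longrightarrow> (\<And>\<phi>. \<gamma> q \<phi> \<subseteq> \<gamma> p \<phi>)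
    \<Longrightarrow> run F \<delta> \<gamma> p U q' \<or> (q' = q \<and> run F \<delta> \<gamma> p U p)"
proof (induction rule: run.induct)
  case (run_one U q)
  then show ?case
    by (simp add: run.run_one)
next
  case (run_sym U a q' q)
  then show ?case
    by (blast intro: run.run_sym)
next
  case (run_seq q V q'' W q' U)
  show ?case
  proof (cases "run F \<delta> \<gamma> p V q''")
    case True
    then show ?thesis
      using run.run_seq[OF _ run_seq.hyps(2,3)] by blast
  next
    case False
    then have "q'' = q" and V: "run F \<delta> \<gamma> p V p"
      using run_seq.IH(1) run_seq.prems by blast+
    then have "run F \<delta> \<gamma> p W q' \<or> (q' = q \<and> run F \<delta> \<gamma> p W p)"
      using run_seq.IH(2) run_seq.prems by blast
    then show ?thesis
      using run.run_seq[OF V _ run_seq.hyps(3)] by blast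
  qed
next
  case (run_par q' q qs Us U)
  have "q' \<in> \<gamma> p (mset qs)"
    using run_par.hyps(1) run_par.prems(2) by blast
  moreover have "\<forall>i<length qs. \<exists>r. run F \<delta> \<gamma> (qs ! i) (Us ! i) r \<and> r \<in> F"
    using run_par.IH by blast
  ultimately show ?case
    using run.run_par[OF _ run_par.hyps(2) _ run_par.hyps(3)] by blast
qed

lemma pa_lang_mono_state:
  assumes "\<And>a. \<delta> q a \<subseteq> \<delta> p a" "\<And>\<phi>. \<gamma> q \<phi> \<subseteq> \<gamma> p \<phi>" "q \<in> F \<Longrightarrow> p \<in> F"
  shows "pa_lang F \<delta> \<gamma> q \<subseteq> pa_lang F \<delta> \<gamma> p"
proof
  fix U
  assume "U \<in> pa_lang F \<delta> \<gamma> q"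
  then obtain q' where run: "run F \<delta> \<gamma> q U q'" and "q' \<in> F"
    unfolding pa_lang_def by blast
  with run_from_larger_state[OF run assms(1,2)] assms(3) show "U \<in> pa_lang F \<delta> \<gamma> p"
    unfolding pa_lang_def by blast
qed

lemma run_Seq_left: "run FF deltaS gammaS e V e' \<Longrightarrow> run FF deltaS gammaS (Seq e f) V (Seq e' f)"
proof (induction rule: run.induct)
  case (run_one U q)
  then show ?case
    by (rule run.run_one)
next
  case (run_sym U a q' q)
  then show ?case
    by (auto intro: run.run_sym)
next
  case (run_seq q V q'' W q' U)
  then show ?case
    by (blast intro: run.run_seq)
next
  case (run_par q' q qs Us U)
  have "Seq q' f \<in> gammaS (Seq q f) (mset qs)"
    using run_par.hyps(1) by auto
  moreover have "\<forall>i<length qs. \<exists>r. run FF deltaS gammaS (qs ! i) (Us ! i) r \<and> r \<in> FF"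
    using run_par.IH by blast
  ultimately show ?case
    using run.run_par[OF _ run_par.hyps(2) _ run_par.hyps(3)] by blast
qed

lemma LS_Plus_subset: "LS e \<union> LS f \<subseteq> LS (Plus e f)"
  unfolding LS_def by (intro Un_least pa_lang_mono_state) (auto intro: FF.intros)

lemma LS_subset_LS_Seq_if_FF: "e \<in> FF \<Longrightarrow> LS f \<subseteq> LS (Seq e f)"
  unfolding LS_def by (rule pa_lang_mono_state) (auto simp: star_op_def intro: FF.intros)

lemma seq_lang_LS_subset: "seq_lang (LS e) (LS f) \<subseteq> LS (Seq e f)"
proof
  fix U
  assume "U \<in> seq_lang (LS e) (LS f)"
  then obtain V W where "V \<in> LS e" "W \<in> LS f" "seq_of U V W"
    by (auto simp: seq_lang_def)
  obtain e' where "run FF deltaS gammaS e V e'" "e' \<in> FF"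
    using \<open>V \<in> LS e\<close> unfolding LS_def pa_lang_def by blast
  then have V: "run FF deltaS gammaS (Seq e f) V (Seq e' f)"
    by (blast intro: run_Seq_left)
  obtain r where W: "run FF deltaS gammaS (Seq e' f) W r" and "r \<in> FF"
    using \<open>W \<in> LS f\<close> LS_subset_LS_Seq_if_FF[OF \<open>e' \<in> FF\<close>] unfolding LS_def pa_lang_def by blast
  have "run FF deltaS gammaS (Seq e f) U r"
    by (rule run.run_seq[OF V W \<open>seq_of U V W\<close>])
  with \<open>r \<in> FF\<close> show "U \<in> LS (Seq e f)"
    unfolding LS_def pa_lang_def by blast
qed

lemma par_lang_LS_subset: "par_lang (LS e) (LS f) \<subseteq> LS (Par e f)"
proof
  fix U
  assume "U \<in> par_lang (LS e) (LS f)"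
  then obtain V W where "V \<in> LS e" "W \<in> LS f" and par: "par_of_list U [V, W]"
    by (auto simp: par_lang_def par_of_def)
  then have runs: "\<forall>i<length [e, f]. \<exists>r. run FF deltaS gammaS ([e, f] ! i) ([V, W] ! i) r \<and> r \<in> FF"
    unfolding LS_def pa_lang_def by (auto simp: All_less_Suc)
  have "One \<in> gammaS (Par e f) (mset [e, f])"
    by simp
  then have "run FF deltaS gammaS (Par e f) U One"
    by (rule run.run_par[OF _ _ runs par]) simp
  then show "U \<in> LS (Par e f)"
    unfolding LS_def pa_lang_def by (blast intro: FF.FF_one)
qed

lemma kleene_LS_subset: "kleene (LS e) \<subseteq> LS (Star e)"
proof -
  have "seq_lang (LS e) (LS (Star e)) \<subseteq> LS (Seq e (Star e))"
    by (rule seq_lang_LS_subset)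
  also have "\<dots> \<subseteq> LS (Star e)"
    unfolding LS_def by (rule pa_lang_mono_state) (auto simp: star_op_def intro: FF.intros)
  finally have step: "seq_lang (LS e) (LS (Star e)) \<subseteq> LS (Star e)" .
  have "lang_pow (LS e) n \<subseteq> LS (Star e)" for n
  proof (induction n)
    case 0
    show ?case
      by (auto simp: LS_def pa_lang_def intro: run.run_one FF.FF_star)
  next
    case (Suc n)
    have "lang_pow (LS e) (Suc n) \<subseteq> seq_lang (LS e) (LS (Star e))"
      using seq_lang_mono[OF order_refl Suc.IH] by simp
    also note step
    finally show ?case .
  qed
  then show ?thesis
    unfolding kleene_def by blast
qed

lemma sem_subset_LS: "sem e \<subseteq> LS e"
proof (induction e)
  case One
  show ?case
    by (auto simp: LS_def pa_lang_def intro: run.run_one FF.FF_one)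
next
  case (Sym a)
  have "run FF deltaS gammaS (Sym a) U One" if "U \<in> sem (Sym a)" for U
    using that by (auto intro: run.run_sym)
  then show ?case
    by (auto simp: LS_def pa_lang_def intro: FF.FF_one)
next
  case (Plus e f)
  then have "sem (Plus e f) \<subseteq> LS e \<union> LS f"
    by auto
  also have "\<dots> \<subseteq> LS (Plus e f)"
    by (rule LS_Plus_subset)
  finally show ?case .
next
  case (Seq e f)
  show ?case
    unfolding sem.simps by (rule order_trans[OF seq_lang_mono[OF Seq.IH] seq_lang_LS_subset])
next
  case (Par e f)
  show ?case
    unfolding sem.simps by (rule order_trans[OF par_lang_mono[OF Par.IH] par_lang_LS_subset])
next
  case (Star e)
  show ?case
    unfolding sem.simps by (rule order_trans[OF kleene_mono[OF Star.IH] kleene_LS_subset])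
qed simp

theorem lemma7p13:
  fixes e :: "'a::finite srexp"
  shows "LS e = sem e"
  by (rule antisym[OF LS_subset_sem sem_subset_LS])

end
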